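(* Let $H$ be a complete graph and let $\mathbf{E}=(E_0,E_1,E_2)$ be an ordered partition of $E(H)$. Let $M$ be a matching in $H$ with $M\subset E_0$ and $|M|<\lfloor\frac12|V(H)|\rfloor$, and let $X=V(H)-V(M)$. Then (1) if $E(H[X])\cap(E_0\cup E_1)\ne\emptyset$, then $H$ contains a good matching for $\mathbf{E}$ of order $|M|+1$; and (2) if $|E_H(V(M),X)\cap E_0|>|E_H(V(M),X)\cap E_2|$, then $H$ contains a good matching for $\mathbf{E}$ of order $|M|+1$.
   Context: An ordered partition $(E_0,E_1,E_2)$ of a set is a triple of pairwise disjoint (possibly empty) sets with that union. A matching $M$ is a good matching for $\mathbf{E}$ if $M\cap E_2=\emptyset$ and $|M\cap E_1|\le1$; the order of a matching is its number of edges. $V(M)$ is the set of endpoints of edges of $M$; for disjoint $A,B\subset V(H)$, $E_H(A,B)$ is the set of edges of $H$ with one end in $A$ and the other in $B$. *)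

theory Defs
  imports Main
begin

text \<open>Simple graphs: edges are 2-element vertex sets. The complete graph on a
finite vertex set V has edge set complete_edges V.\<close>

definition complete_edges :: "'a set \<Rightarrow> 'a set set" where
  "complete_edges V = {e. e \<subseteq> V \<and> card e = 2}"

definition matching :: "'a set set \<Rightarrow> bool" where
  "matching M \<longleftrightarrow> (\<forall>e\<in>M. \<forall>f\<in>M. e \<noteq> f \<longrightarrow> e \<inter> f = {})"

definition ordered_partition3 :: "'a set \<Rightarrow> 'a set \<Rightarrow> 'a set \<Rightarrow> 'a set \<Rightarrow> bool" where
  "ordered_partition3 E0 E1 E2 E \<longleftrightarrow>
     E0 \<union> E1 \<union> E2 = E \<and> E0 \<inter> E1 = {} \<and> E0 \<inter> E2 = {} \<and> E1 \<inter> E2 = {}"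

definition good_matching :: "'a set set \<Rightarrow> 'a set set \<Rightarrow> 'a set set \<Rightarrow> bool" where
  "good_matching E1 E2 M \<longleftrightarrow> matching M \<and> M \<inter> E2 = {} \<and> card (M \<inter> E1) \<le> 1"

definition verts :: "'a set set \<Rightarrow> 'a set" where
  "verts M = \<Union>M"

definition edges_between :: "'a set set \<Rightarrow> 'a set \<Rightarrow> 'a set \<Rightarrow> 'a set set" where
  "edges_between E A B = {e \<in> E. \<exists>a\<in>A. \<exists>b\<in>B. e = {a, b}}"

definition induced_edges :: "'a set set \<Rightarrow> 'a set \<Rightarrow> 'a set set" where
  "induced_edges E X = {e \<in> E. e \<subseteq> X}"

end

theory Submission
  imports Defs
begin

text \<open>For (1), an edge of E0 \<union> E1 inside X can simply be added to M.
For (2), double counting the edges between V(M) and X gives an edge uv of M whose endpoints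
send more E0-edges than E2-edges into X. Since |M| < \<lfloor>|V|/2\<rfloor> we have |X| \<ge> 2, and then if
x = y for all x, y \<in> X with ux \<in> E0 and vy \<notin> E2, u has at most as many E0-neighbours in X as
v has E2-neighbours there. This cannot hold for both orientations of uv, so for one of them
there are distinct such x and y, and replacing uv by ux and vy gives a good matching of order
|M| + 1.\<close>

definition nbrs_in :: "'a set set \<Rightarrow> 'a set \<Rightarrow> 'a \<Rightarrow> 'a set" where
  "nbrs_in F X a = {x \<in> X. {a, x} \<in> F}"

lemma card_le_card_if_no_distinct_pair:
  assumes "finite X" "2 \<le> card X" "A \<subseteq> X" "B \<subseteq> X"
    and eq: "\<And>x y. x \<in> A \<Longrightarrow> y \<in> X - B \<Longrightarrow> x = y"
  shows "card A \<le> card B"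
proof (cases "X - B = {}")
  case True
  then have "B = X" using assms(4) by blast
  then show ?thesis using card_mono[OF assms(1,3)] by simp
next
  case False
  then obtain y where y: "y \<in> X - B" by blast
  show ?thesis
  proof (cases "A = {}")
    case False
    then have "A = {y}" using eq y by blast
    moreover have "X - B = {y}" using eq y \<open>A = {y}\<close> by blast
    then have "card X - card B = 1"
      using card_Diff_subset[OF finite_subset[OF assms(4,1)] assms(4)] by simp
    ultimately show ?thesis using assms(2) by simp
  qed simp
qed

lemma matching_Un:
  assumes "matching N" "matching P" "verts N \<inter> verts P = {}"
  shows "matching (N \<union> P)"
  using assms unfolding matching_def verts_def by blast

lemma good_matching_Un:
  assumes "matching N" "N \<inter> (E1 \<union> E2) = {}"
    and "matching P" "P \<inter> E2 = {}" "card (P \<inter> E1) \<le> 1"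
    and "verts N \<inter> verts P = {}"
  shows "good_matching E1 E2 (N \<union> P)"
proof -
  have "(N \<union> P) \<inter> E1 = P \<inter> E1" using assms(2) by blast
  then show ?thesis
    using assms matching_Un unfolding good_matching_def by auto
qed

lemma finite_complete_edges: "finite V \<Longrightarrow> finite (complete_edges V)"
  unfolding complete_edges_def by (auto intro: finite_subset[of _ "Pow V"])

lemma verts_subset: "M \<subseteq> complete_edges V \<Longrightarrow> verts M \<subseteq> V"
  unfolding verts_def complete_edges_def by blast

lemma card_verts_le:
  assumes "M \<subseteq> complete_edges V"
  shows "card (verts M) \<le> 2 * card M"
proof -
  have "card (verts M) \<le> (\<Sum>e\<in>M. card e)"
    unfolding verts_def by (rule card_Union_le_sum_card)
  also have "\<dots> = 2 * card M"
    using assms by (simp add: complete_edges_def subset_eq)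
  finally show ?thesis .
qed

lemma sum_verts_matching:
  assumes "finite V" "M \<subseteq> complete_edges V" "matching M"
  shows "sum f (verts M) = (\<Sum>e\<in>M. sum f e)"
proof -
  have "\<forall>e\<in>M. finite e"
    using assms(1,2) unfolding complete_edges_def by (blast intro: finite_subset)
  moreover have "\<forall>e\<in>M. \<forall>e'\<in>M. e \<noteq> e' \<longrightarrow> e \<inter> e' = {}"
    using assms(3) unfolding matching_def by blast
  ultimately show ?thesis unfolding verts_def by (simp add: sum.Union_disjoint)
qed

lemma card_edges_between_eq_sum:
  assumes "finite V" "A \<subseteq> V" "X \<subseteq> V" "A \<inter> X = {}"
  shows "card (edges_between (complete_edges V) A X \<inter> F) = (\<Sum>a\<in>A. card (nbrs_in F X a))"
proof -
  have "edges_between (complete_edges V) A X \<inter> F = (\<Union>a\<in>A. (\<lambda>x. {a, x}) ` nbrs_in F X a)"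
    using assms(2-4)
    by (auto simp: edges_between_def nbrs_in_def complete_edges_def card_2_iff) blast+
  moreover have "card (\<Union>a\<in>A. (\<lambda>x. {a, x}) ` nbrs_in F X a)
      = (\<Sum>a\<in>A. card ((\<lambda>x. {a, x}) ` nbrs_in F X a))"
    using assms finite_subset[OF assms(2,1)] finite_subset[OF assms(3,1)]
    by (intro card_UN_disjoint) (auto simp: nbrs_in_def doubleton_eq_iff)
  moreover have "inj_on (\<lambda>x. {a, x}) (nbrs_in F X a)" if "a \<in> A" for a
    using that assms(4) by (auto simp: inj_on_def doubleton_eq_iff nbrs_in_def)
  ultimately show ?thesis by (simp add: card_image)
qed

lemma good_matching_add_edge:
  assumes "finite V" "M \<subseteq> complete_edges V" "matching M" "M \<inter> (E1 \<union> E2) = {}"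
    and "e \<in> complete_edges V" "e \<subseteq> V - verts M" "e \<notin> E2"
  shows "\<exists>M'. M' \<subseteq> complete_edges V \<and> good_matching E1 E2 M' \<and> card M' = card M + 1"
proof (intro exI conjI)
  have "e \<noteq> {}" using assms(5) by (auto simp: complete_edges_def)
  then have "e \<notin> M" using assms(6) by (auto simp: verts_def)
  moreover have "finite M"
    using assms(1,2) finite_complete_edges finite_subset by blast
  ultimately show "card (M \<union> {e}) = card M + 1" by simp
  have "card ({e} \<inter> E1) \<le> 1" by (simp add: card_le_Suc0_iff_eq)
  then show "good_matching E1 E2 (M \<union> {e})"
    using assms(3,4,6,7) by (intro good_matching_Un) (auto simp: matching_def verts_def)
qed (use assms in auto)

lemma good_matching_swap_edge:
  assumes "finite V" "M \<subseteq> complete_edges V" "matching M" "M \<inter> (E1 \<union> E2) = {}"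
    and e: "{u, v} \<in> M" "u \<noteq> v"
    and xy: "x \<in> V - verts M" "y \<in> V - verts M" "x \<noteq> y"
    and "{u, x} \<notin> E1 \<union> E2" "{v, y} \<notin> E2"
  shows "\<exists>M'. M' \<subseteq> complete_edges V \<and> good_matching E1 E2 M' \<and> card M' = card M + 1"
proof (intro exI conjI)
  let ?N = "M - {{u, v}}" and ?P = "{{u, x}, {v, y}}"
  have uv: "u \<in> verts M" "v \<in> verts M" using e by (auto simp: verts_def)
  then have "u \<noteq> x" "u \<noteq> y" "v \<noteq> x" "v \<noteq> y" using xy by auto
  then have P: "{u, x} \<inter> {v, y} = {}" using e(2) xy(3) by auto
  have "finite M" using assms(1,2) finite_complete_edges finite_subset by blast
  then have "card ?N + 1 = card M" using card_Suc_Diff1[OF _ e(1)] by simp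
  moreover have "?N \<inter> ?P = {}" "{u, x} \<noteq> {v, y}"
    using uv xy by (auto simp: verts_def doubleton_eq_iff)
  ultimately show "card (?N \<union> ?P) = card M + 1"
    using \<open>finite M\<close> by (simp add: card_Un_disjoint)
  have "h \<inter> {u, v} = {}" if "h \<in> ?N" for h
    using that assms(3) e(1) unfolding matching_def by (metis DiffE singletonI)
  then have "verts ?N \<inter> {u, v} = {}" unfolding verts_def by blast
  then have "verts ?N \<inter> verts ?P = {}" using xy by (auto simp: verts_def)
  moreover have "matching ?P" using P by (auto simp: matching_def)
  moreover have "matching ?N" using assms(3) by (auto simp: matching_def)
  moreover have "card (?P \<inter> E1) \<le> 1"
    using assms(10) card_mono[of "{{v, y}}" "?P \<inter> E1"] by fastforce
  ultimately show "good_matching E1 E2 (?N \<union> ?P)"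
    using assms(4,10,11) by (intro good_matching_Un) auto
  show "?N \<union> ?P \<subseteq> complete_edges V"
    using assms(2) xy verts_subset[OF assms(2)] uv \<open>u \<noteq> x\<close> \<open>v \<noteq> y\<close>
    by (auto simp: complete_edges_def)
qed

lemma good_matching_swap_at_excess_edge:
  assumes "finite V" "M \<subseteq> complete_edges V" "matching M" "M \<inter> (E1 \<union> E2) = {}"
    and "E0 \<inter> (E1 \<union> E2) = {}"
    and "{u, v} \<in> M" "u \<noteq> v" "2 \<le> card (V - verts M)"
    and excess: "card (nbrs_in E2 (V - verts M) u) + card (nbrs_in E2 (V - verts M) v)
      < card (nbrs_in E0 (V - verts M) u) + card (nbrs_in E0 (V - verts M) v)"
  shows "\<exists>M'. M' \<subseteq> complete_edges V \<and> good_matching E1 E2 M' \<and> card M' = card M + 1"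
proof -
  let ?X = "V - verts M"
  have swap: "\<exists>M'. M' \<subseteq> complete_edges V \<and> good_matching E1 E2 M' \<and> card M' = card M + 1"
    if "{a, b} \<in> M" "a \<noteq> b" "x \<in> nbrs_in E0 ?X a" "y \<in> ?X - nbrs_in E2 ?X b" "x \<noteq> y"
    for a b x y
    by (rule good_matching_swap_edge[OF assms(1-4) that(1,2), where x = x and y = y])
      (use that assms(5) in \<open>auto simp: nbrs_in_def\<close>)
  have bound: "card (nbrs_in E0 ?X a) \<le> card (nbrs_in E2 ?X b)"
    if "\<forall>x\<in>nbrs_in E0 ?X a. \<forall>y\<in>?X - nbrs_in E2 ?X b. x = y" for a b
    by (rule card_le_card_if_no_distinct_pair[of ?X])
      (use that assms(1,8) in \<open>auto simp: nbrs_in_def\<close>)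
  have "(\<exists>x\<in>nbrs_in E0 ?X u. \<exists>y\<in>?X - nbrs_in E2 ?X v. x \<noteq> y)
      \<or> (\<exists>x\<in>nbrs_in E0 ?X v. \<exists>y\<in>?X - nbrs_in E2 ?X u. x \<noteq> y)"
  proof (rule ccontr)
    assume "\<not> ?thesis"
    then have "card (nbrs_in E0 ?X u) \<le> card (nbrs_in E2 ?X v)"
      and "card (nbrs_in E0 ?X v) \<le> card (nbrs_in E2 ?X u)"
      by (simp_all add: bound)
    with excess show False by linarith
  qed
  moreover have "{v, u} \<in> M" using assms(6) by (simp add: insert_commute)
  ultimately show ?thesis
    using swap assms(6,7) by blast
qed

theorem lemma12:
  fixes V :: "'a set" and E0 E1 E2 M :: "'a set set"
  assumes "finite V"
    and "ordered_partition3 E0 E1 E2 (complete_edges V)"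
    and "M \<subseteq> complete_edges V" and "matching M"
    and "M \<subseteq> E0"
    and "card M < card V div 2"
  shows "(induced_edges (complete_edges V) (V - verts M) \<inter> (E0 \<union> E1) \<noteq> {} \<longrightarrow>
           (\<exists>M'. M' \<subseteq> complete_edges V \<and> good_matching E1 E2 M' \<and> card M' = card M + 1))
       \<and> (card (edges_between (complete_edges V) (verts M) (V - verts M) \<inter> E0)
            > card (edges_between (complete_edges V) (verts M) (V - verts M) \<inter> E2) \<longrightarrow>
           (\<exists>M'. M' \<subseteq> complete_edges V \<and> good_matching E1 E2 M' \<and> card M' = card M + 1))"
proof (intro conjI impI)
  let ?X = "V - verts M"
  have part: "E0 \<inter> (E1 \<union> E2) = {}" "E1 \<inter> E2 = {}"
    using assms(2) by (auto simp: ordered_partition3_def)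
  then have M: "M \<inter> (E1 \<union> E2) = {}" using assms(5) by blast
  show "\<exists>M'. M' \<subseteq> complete_edges V \<and> good_matching E1 E2 M' \<and> card M' = card M + 1"
    if "induced_edges (complete_edges V) ?X \<inter> (E0 \<union> E1) \<noteq> {}"
    using that part good_matching_add_edge[OF assms(1,3,4) M]
    by (auto simp: induced_edges_def)
  have "verts M \<inter> ?X = {}" by blast
  then have count: "card (edges_between (complete_edges V) (verts M) ?X \<inter> F)
      = (\<Sum>e\<in>M. \<Sum>a\<in>e. card (nbrs_in F ?X a))" for F
    by (simp only: card_edges_between_eq_sum[OF assms(1) verts_subset[OF assms(3)] Diff_subset]
        sum_verts_matching[OF assms(1,3,4)])
  assume "card (edges_between (complete_edges V) (verts M) ?X \<inter> E2)
    < card (edges_between (complete_edges V) (verts M) ?X \<inter> E0)"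
  then have "(\<Sum>e\<in>M. \<Sum>a\<in>e. card (nbrs_in E2 ?X a)) < (\<Sum>e\<in>M. \<Sum>a\<in>e. card (nbrs_in E0 ?X a))"
    by (simp only: count)
  then obtain e where "e \<in> M"
    and "(\<Sum>a\<in>e. card (nbrs_in E2 ?X a)) < (\<Sum>a\<in>e. card (nbrs_in E0 ?X a))"
    by (meson not_le sum_mono)
  moreover obtain u v where "e = {u, v}" "u \<noteq> v"
    using \<open>e \<in> M\<close> assms(3) by (auto simp: complete_edges_def card_2_iff)
  moreover have "2 \<le> card ?X"
  proof -
    have "card ?X = card V - card (verts M)"
      using assms(1) verts_subset[OF assms(3)] by (simp add: card_Diff_subset finite_subset)
    then show ?thesis using card_verts_le[OF assms(3)] assms(6) by linarith
  qed
  ultimately show "\<exists>M'. M' \<subseteq> complete_edges V \<and> good_matching E1 E2 M' \<and> card M' = card M + 1"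
    by (intro good_matching_swap_at_excess_edge[OF assms(1,3,4) M part(1)]) simp_all
qed

end
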